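(* Let $k:\mathbb{R}_+\to\mathbb{R}_+$ be a non-increasing positive function, let $\sigma>0$ and $\delta\in(0,0.5]$. Let $P=\{p_1,\dots,p_N\}\subset\mathbb{R}$ be a univariate data set and let $\Delta=[a,b]$ with $a<b$. Suppose $|P\cap\Delta|\ge 2$, $a\ge\min P$ and $b\le\max P$. Define $\Delta'=[a',b']$ with $a'=(a+\min(P\cap\Delta))/2$ and $b'=(b+\max(P\cap\Delta))/2$, and let $M=\max_{x\in\Delta'}\min_{i=1,\dots,N}|x-p_i|$. Let $L(P)$ be the standard graph Laplacian of the graph on vertices $P$ with similarities $s(P,i,j)=k(|T_\Delta(p_i)-T_\Delta(p_j)|/\sigma)$. Then $$\lambda_2(L(P))\ge \frac{1}{|P|^3}\,k\!\left(\frac{2M+\delta C}{\sigma}\right),$$ where $C=\max\{D,D^{1-\delta}\}$ and $D=\max\{a-\min P,\ \max P-b\}$.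
   Context: For an interval $\Delta=[a,b]$ and $\delta\in(0,0.5]$, $T_\Delta:\mathbb{R}\to\mathbb{R}$ is defined by $T_\Delta(z)=-\delta\big(a-z+(\delta(1-\delta))^{1/\delta}\big)^{1-\delta}+\delta(\delta(1-\delta))^{(1-\delta)/\delta}$ for $z<a$; $T_\Delta(z)=z-a$ for $a\le z\le b$; $T_\Delta(z)=\delta\big(z-b+(\delta(1-\delta))^{1/\delta}\big)^{1-\delta}-\delta(\delta(1-\delta))^{(1-\delta)/\delta}+(b-a)$ for $z>b$. For an affinity matrix $A$ with degree matrix $D=\mathrm{diag}(\sum_jA_{ij})$, the standard Laplacian is $D-A$. $\lambda_2(\cdot)$ is the second smallest eigenvalue; $|P|=N$. *)

theory Defs
  imports "HOL-Analysis.Analysis" "Jordan_Normal_Form.Char_Poly"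
begin

definition T_Delta :: "real \<Rightarrow> real \<Rightarrow> real \<Rightarrow> real \<Rightarrow> real" where
  "T_Delta \<delta> a b z =
    (if z < a then
       - \<delta> * (a - z + (\<delta> * (1 - \<delta>)) powr (1 / \<delta>)) powr (1 - \<delta>)
       + \<delta> * (\<delta> * (1 - \<delta>)) powr ((1 - \<delta>) / \<delta>)
     else if z \<le> b then z - a
     else \<delta> * (z - b + (\<delta> * (1 - \<delta>)) powr (1 / \<delta>)) powr (1 - \<delta>)
       - \<delta> * (\<delta> * (1 - \<delta>)) powr ((1 - \<delta>) / \<delta>) + (b - a))"

definition std_laplacian :: "nat \<Rightarrow> (nat \<Rightarrow> nat \<Rightarrow> real) \<Rightarrow> real mat" where
  "std_laplacian N A =
     mat N N (\<lambda>(i, j). (if i = j then (\<Sum>l<N. A i l) else 0) - A i j)"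

text \<open>Eigenvalues (with algebraic multiplicity) of a real square matrix: the real roots
  of its characteristic polynomial. For symmetric matrices all eigenvalues are real.\<close>
definition real_eigenvalues :: "real mat \<Rightarrow> real multiset" where
  "real_eigenvalues A = proots (char_poly A)"

definition lambda2 :: "real mat \<Rightarrow> real" where
  "lambda2 A = sorted_list_of_multiset (real_eigenvalues A) ! 1"

end

theory Submission
  imports Defs "Jordan_Normal_Form.Spectral_Radius"
begin

text \<open>In the basis \<open>(1, e\<^sub>2, \<dots>, e\<^sub>N)\<close> the Laplacian becomes block upper
  triangular with a zero in the corner, so its spectrum is \<open>0\<close> together with the spectrum
  of a deflated \<open>(N-1)\<times>(N-1)\<close> block, whose eigenvectors lift to eigenvectors orthogonal to
  the constant vector.  Hence \<open>\<lambda>\<^sub>2 \<ge> c\<close> as soon as the Dirichlet form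
  \<open>\<Sum>\<^sub>i\<^sub>j A\<^sub>i\<^sub>j (w\<^sub>i - w\<^sub>j)\<^sup>2 / 2\<close> dominates \<open>c \<parallel>w\<parallel>\<^sup>2\<close> on mean-zero vectors.
  Keeping only the edges between neighbours in the sorted order of the data and using
  the discrete Poincar\'e inequality on a path gives \<open>c = K / N\<^sup>3\<close>, where \<open>K\<close> is the
  least weight of such an edge.  Finally every gap between neighbours is at most
  \<open>2M + \<delta>C\<close> after warping: inside \<open>\<Delta>\<close> a gap of length \<open>g\<close> has a midpoint at distance
  \<open>g/2\<close> from the data, the gaps at the two ends of \<open>P \<inter> \<Delta>\<close> are controlled by the
  distance of \<open>a'\<close> and \<open>b'\<close> to the data, and outside \<open>\<Delta>\<close> the warping is sub-additive
  and so moves points by at most \<open>\<delta> D\<^sup>1\<^sup>-\<^sup>\<delta>\<close>.\<close>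

section \<open>The second eigenvalue of a Laplacian\<close>

lemma index_mult_mat_sum:
  "A \<in> carrier_mat m n \<Longrightarrow> B \<in> carrier_mat n p \<Longrightarrow> i < m \<Longrightarrow> j < p \<Longrightarrow>
    (A * B) $$ (i,j) = (\<Sum>k<n. A $$ (i,k) * B $$ (k,j))"
  by (simp add: scalar_prod_def atLeast0LessThan)

lemma sum_if_delta:
  "finite A \<Longrightarrow> (\<Sum>k\<in>A. if P k then (if i = k then x else 0) else 0) = (if i \<in> A \<and> P i then x else 0)"
proof -
  assume A: "finite A"
  have "(\<Sum>k\<in>A. if P k then (if i = k then x else 0) else 0) =
        (\<Sum>k\<in>A. if i = k then (if P i then x else 0) else 0)"
    by (rule sum.cong, auto)
  thus ?thesis using A by (simp add: sum.delta)
qed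

lemma sum_if_conj_delta:
  "finite A \<Longrightarrow> (\<Sum>k\<in>A. if P k \<and> i = k then x else 0) = (if i \<in> A \<and> P i then x else 0)"
  by (subst sum_if_delta[symmetric], auto intro: sum.cong)

lemma mult_if_one_zero [simp]:
  "x * (if P then 1 else 0) = (if P then x else (0::'a::comm_ring_1))"
  "(if P then 1 else 0) * x = (if P then x else (0::'a::comm_ring_1))"
  by auto

text \<open>The change of basis to \<open>(1, e\<^sub>2, \<dots>, e\<^sub>n)\<close>, its inverse, and the block it leaves
  in the lower right corner of a matrix with zero row sums.\<close>

definition deflation_mat :: "nat \<Rightarrow> 'a::comm_ring_1 mat" where
  "deflation_mat n = mat n n (\<lambda>(i,j). if j = 0 then 1 else if i = j then 1 else 0)"

definition deflation_mat_inv :: "nat \<Rightarrow> 'a::comm_ring_1 mat" where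
  "deflation_mat_inv n =
     mat n n (\<lambda>(i,j). (if i = j then 1 else 0) - (if j = 0 \<and> i \<noteq> 0 then 1 else 0))"

definition deflated_mat :: "nat \<Rightarrow> (nat \<Rightarrow> nat \<Rightarrow> 'a::comm_ring_1) \<Rightarrow> 'a mat" where
  "deflated_mat n F = mat (n-1) (n-1) (\<lambda>(i,j). F (Suc i) (Suc j) - F 0 (Suc j))"

lemma deflation_mat_mult_inv: "deflation_mat n * deflation_mat_inv n = (1\<^sub>m n :: 'a::comm_ring_1 mat)"
proof (rule eq_matI)
  fix i j assume "i < dim_row (1\<^sub>m n :: 'a mat)" "j < dim_col (1\<^sub>m n :: 'a mat)"
  hence i: "i < n" and j: "j < n" by auto
  have "(deflation_mat n * deflation_mat_inv n :: 'a mat) $$ (i,j) =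
      (\<Sum>k<n. ((if k=0 then 1 else 0) + (if k \<noteq> 0 \<and> i = k then 1 else 0)) *
        ((if k=j then 1 else 0) - (if j=0 \<and> k\<noteq>0 then 1 else 0)))"
    by (subst index_mult_mat_sum[of _ n n _ n], auto simp: deflation_mat_def deflation_mat_inv_def i j
        intro!: sum.cong)
  also have "\<dots> = (1\<^sub>m n :: 'a mat) $$ (i,j)"
    using i j by (auto simp: algebra_simps sum.distrib sum_subtractf if_distrib[of "\<lambda>x. x * _"]
        sum.delta' sum_if_delta sum_if_conj_delta cong: if_cong conj_cong)
  finally show "(deflation_mat n * deflation_mat_inv n :: 'a mat) $$ (i,j) = (1\<^sub>m n :: 'a mat) $$ (i,j)" .
qed (auto simp: deflation_mat_def deflation_mat_inv_def)

lemma deflation_mat_inv_mult: "deflation_mat_inv n * deflation_mat n = (1\<^sub>m n :: 'a::comm_ring_1 mat)"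
proof (rule eq_matI)
  fix i j assume "i < dim_row (1\<^sub>m n :: 'a mat)" "j < dim_col (1\<^sub>m n :: 'a mat)"
  hence i: "i < n" and j: "j < n" by auto
  have "(deflation_mat_inv n * deflation_mat n :: 'a mat) $$ (i,j) =
      (\<Sum>k<n. ((if i=k then 1 else 0) - (if k=0 \<and> i\<noteq>0 then 1 else 0)) *
        ((if j=0 then 1 else 0) + (if j \<noteq> 0 \<and> k = j then 1 else 0)))"
    by (subst index_mult_mat_sum[of _ n n _ n], auto simp: deflation_mat_def deflation_mat_inv_def i j
        intro!: sum.cong)
  also have "\<dots> = (1\<^sub>m n :: 'a mat) $$ (i,j)"
    using i j by (auto simp: algebra_simps sum.distrib sum_subtractf if_distrib[of "\<lambda>x. x * _"]
        sum.delta' sum_if_delta cong: if_cong)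
  finally show "(deflation_mat_inv n * deflation_mat n :: 'a mat) $$ (i,j) = (1\<^sub>m n :: 'a mat) $$ (i,j)" .
qed (auto simp: deflation_mat_def deflation_mat_inv_def)

lemma deflation_mat_inv_mult_left:
  "deflation_mat_inv n * mat n n (\<lambda>(i,j). F i j) =
     mat n n (\<lambda>(i,l). F i l - (if i \<noteq> 0 then F 0 l else (0::'a::comm_ring_1)))"
proof (rule eq_matI)
  fix i j assume "i < dim_row (mat n n (\<lambda>(i,l). F i l - (if i\<noteq>0 then F 0 l else (0::'a))))"
     "j < dim_col (mat n n (\<lambda>(i,l). F i l - (if i\<noteq>0 then F 0 l else (0::'a))))"
  hence i: "i < n" and j: "j < n" by auto
  have "(deflation_mat_inv n * mat n n (\<lambda>(i,j). F i j) :: 'a mat) $$ (i,j) =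
      (\<Sum>k<n. ((if i=k then 1 else 0) - (if k=0 \<and> i\<noteq>0 then 1 else 0)) * F k j)"
    by (subst index_mult_mat_sum[of _ n n _ n], auto simp: deflation_mat_inv_def i j intro!: sum.cong)
  also have "\<dots> = F i j - (if i\<noteq>0 then F 0 j else 0)"
    using i j by (auto simp: algebra_simps sum.distrib sum_subtractf if_distrib[of "\<lambda>x. x * _"]
        sum.delta' sum_if_delta cong: if_cong)
  finally show "(deflation_mat_inv n * mat n n (\<lambda>(i,j). F i j) :: 'a mat) $$ (i,j) =
      mat n n (\<lambda>(i,l). F i l - (if i\<noteq>0 then F 0 l else (0::'a))) $$ (i,j)"
    using i j by simp
qed (auto simp: deflation_mat_inv_def)

lemma deflation_conj_zero_row_sums:
  assumes n: "n \<ge> 1" and rs: "\<And>i. i < n \<Longrightarrow> (\<Sum>l<n. F i l) = (0::'a::comm_ring_1)"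
  shows "deflation_mat_inv n * mat n n (\<lambda>(i,j). F i j) * deflation_mat n =
    four_block_mat (0\<^sub>m 1 1) (mat 1 (n-1) (\<lambda>(i,j). F 0 (Suc j))) (0\<^sub>m (n-1) 1) (deflated_mat n F)"
    (is "_ = ?B")
proof (rule eq_matI)
  fix i j assume "i < dim_row ?B" "j < dim_col ?B"
  hence i: "i < n" and j: "j < n" using n by (auto simp: deflated_mat_def)
  have "(deflation_mat_inv n * mat n n (\<lambda>(i,j). F i j) * deflation_mat n :: 'a mat) $$ (i,j) =
      (\<Sum>l<n. (F i l - (if i\<noteq>0 then F 0 l else 0)) *
        ((if j=0 then 1 else 0) + (if j \<noteq> 0 \<and> l = j then 1 else 0)))"
    unfolding deflation_mat_inv_mult_left
    by (subst index_mult_mat_sum[of _ n n _ n], auto simp: deflation_mat_def i j intro!: sum.cong)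
  also have "\<dots> = (if j = 0 then (\<Sum>l<n. F i l) - (if i\<noteq>0 then (\<Sum>l<n. F 0 l) else 0)
                   else F i j - (if i\<noteq>0 then F 0 j else 0))"
    using i j by (auto simp: algebra_simps sum.distrib sum_subtractf if_distrib[of "\<lambda>x. x * _"]
        sum.delta' sum_if_delta cong: if_cong)
  also have "\<dots> = ?B $$ (i,j)"
    using i j n rs[OF i] rs[of 0] by (auto simp: deflated_mat_def)
  finally show "(deflation_mat_inv n * mat n n (\<lambda>(i,j). F i j) * deflation_mat n :: 'a mat) $$ (i,j) =
      ?B $$ (i,j)" .
qed (insert n, auto simp: deflation_mat_def deflation_mat_inv_def deflated_mat_def)

lemma char_poly_zero_row_sums:
  assumes n: "n \<ge> 1" and rs: "\<And>i. i < n \<Longrightarrow> (\<Sum>l<n. F i l) = (0::'a::comm_ring_1)"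
  shows "char_poly (mat n n (\<lambda>(i,j). F i j)) = [:0,1:] * char_poly (deflated_mat n F)"
proof -
  let ?L = "mat n n (\<lambda>(i,j). F i j)" and ?B = "deflation_mat n :: 'a mat"
    and ?Bi = "deflation_mat_inv n :: 'a mat"
  let ?T = "four_block_mat (0\<^sub>m 1 1) (mat 1 (n-1) (\<lambda>(i,j). F 0 (Suc j))) (0\<^sub>m (n-1) 1) (deflated_mat n F)"
  have c: "?L \<in> carrier_mat n n" "?B \<in> carrier_mat n n" "?Bi \<in> carrier_mat n n" "?T \<in> carrier_mat n n"
    using n by (auto simp: deflation_mat_def deflation_mat_inv_def deflated_mat_def)
  have "?L = (?B * ?Bi) * ?L * (?B * ?Bi)"
    using c by (simp add: deflation_mat_mult_inv)
  also have "\<dots> = ?B * (?Bi * ?L * ?B) * ?Bi"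
  proof -
    have "(?B * ?Bi) * ?L = ?B * (?Bi * ?L)" using assoc_mult_mat[OF c(2) c(3) c(1)] .
    moreover have "?B * (?Bi * ?L) * (?B * ?Bi) = (?B * (?Bi * ?L) * ?B) * ?Bi"
      using c by (subst assoc_mult_mat[of _ n n _ n _ n], auto)
    moreover have "?B * (?Bi * ?L) * ?B = ?B * (?Bi * ?L * ?B)"
      using c by (subst assoc_mult_mat[of _ n n _ n _ n], auto)
    ultimately show ?thesis by simp
  qed
  finally have "?L = ?B * (?Bi * ?L * ?B) * ?Bi" .
  hence "?L = ?B * ?T * ?Bi" by (simp only: deflation_conj_zero_row_sums[OF n rs])
  hence "similar_mat ?L ?T"
    unfolding similar_mat_def using c deflation_mat_mult_inv deflation_mat_inv_mult
    by (blast intro: similar_mat_witI[of _ _ n])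
  hence "char_poly ?L = char_poly ?T" by (rule char_poly_similar)
  also have "\<dots> = char_poly (0\<^sub>m 1 1 :: 'a mat) * char_poly (deflated_mat n F)"
    by (rule char_poly_four_block_zeros_col, auto simp: deflated_mat_def)
  also have "char_poly (0\<^sub>m 1 1 :: 'a mat) = [:0,1:]"
    by (simp add: char_poly_defs det_def sign_def)
  finally show ?thesis .
qed

text \<open>An eigenvector \<open>y\<close> of the deflated block, padded by a leading \<open>0\<close> and shifted by its
  mean, is an eigenvector of the full matrix orthogonal to the constant vector.\<close>

lemma deflated_mat_eigenvector_lift:
  fixes F :: "nat \<Rightarrow> nat \<Rightarrow> 'a::field_char_0"
  assumes n: "n \<ge> 1" and sym: "\<And>i j. i < n \<Longrightarrow> j < n \<Longrightarrow> F i j = F j i"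
    and rs: "\<And>i. i < n \<Longrightarrow> (\<Sum>l<n. F i l) = 0"
    and ev: "eigenvector (deflated_mat n F) y \<mu>"
  shows "\<exists>w. (\<forall>i<n. (\<Sum>j<n. F i j * w j) = \<mu> * w i) \<and> (\<Sum>i<n. w i) = 0 \<and> (\<exists>i<n. w i \<noteq> 0)"
proof -
  obtain m where nm: "n = Suc m" using n by (cases n, auto)
  have yc: "y \<in> carrier_vec m" and y0: "y \<noteq> 0\<^sub>v m" and eq: "deflated_mat n F *\<^sub>v y = \<mu> \<cdot>\<^sub>v y"
    using ev unfolding eigenvector_def by (auto simp: deflated_mat_def nm)
  have eqi: "(\<Sum>j<m. (F (Suc i) (Suc j) - F 0 (Suc j)) * y$j) = \<mu> * y$i" if i: "i < m" for i
  proof -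
    have "(deflated_mat n F *\<^sub>v y) $ i = (\<mu> \<cdot>\<^sub>v y) $ i" using eq by simp
    thus ?thesis using i yc by (simp add: deflated_mat_def nm scalar_prod_def atLeast0LessThan)
  qed
  define z where "z j = (if j = 0 then 0 else y$(j-1))" for j
  define Lz where "Lz i = (\<Sum>j<n. F i j * z j)" for i
  have Lz_shift: "Lz i = (\<Sum>j<m. F i (Suc j) * y$j)" for i
    unfolding Lz_def nm by (subst sum.lessThan_Suc_shift, simp add: z_def)
  define s where "s = Lz 0"
  have Lz_eq: "Lz i = \<mu> * z i + s" if i: "i < n" for i
  proof (cases i)
    case 0 thus ?thesis by (simp add: z_def s_def)
  next
    case (Suc i')
    hence i': "i' < m" using i nm by auto
    have "Lz i - Lz 0 = (\<Sum>j<m. (F (Suc i') (Suc j) - F 0 (Suc j)) * y$j)"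
      unfolding Lz_shift Suc by (simp add: sum_subtractf algebra_simps)
    also have "\<dots> = \<mu> * z i" using eqi[OF i'] by (simp add: z_def Suc)
    finally show ?thesis by (simp add: s_def algebra_simps)
  qed
  have colsum: "(\<Sum>i<n. Lz i) = 0"
  proof -
    have "(\<Sum>i<n. Lz i) = (\<Sum>j<n. (\<Sum>i<n. F j i) * z j)"
      unfolding Lz_def by (subst sum.swap, auto simp: sum_distrib_right sym intro!: sum.cong)
    thus ?thesis using rs by simp
  qed
  define c where "c = (\<Sum>i<n. z i) / of_nat n"
  have nz: "(of_nat n :: 'a) \<noteq> 0" using n by auto
  have "\<mu> * (\<Sum>i<n. z i) + of_nat n * s = 0"
    using colsum by (simp add: Lz_eq sum.distrib sum_distrib_left)
  hence key: "\<mu> * c + s = 0"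
    using nz unfolding c_def by (simp add: field_simps)
  define w where "w i = z i - c" for i
  show ?thesis
  proof (intro exI[of _ w] conjI allI impI)
    fix i assume i: "i < n"
    have "(\<Sum>j<n. F i j * w j) = Lz i - c * (\<Sum>j<n. F i j)"
      unfolding w_def Lz_def by (simp add: algebra_simps sum_subtractf sum_distrib_left)
    also have "\<dots> = \<mu> * w i" using rs[OF i] Lz_eq[OF i] key unfolding w_def by (simp add: algebra_simps)
    finally show "(\<Sum>j<n. F i j * w j) = \<mu> * w i" .
  next
    show "(\<Sum>i<n. w i) = 0" unfolding w_def c_def using nz by (simp add: sum_subtractf)
  next
    show "\<exists>i<n. w i \<noteq> 0"
    proof (rule ccontr)
      assume "\<not> (\<exists>i<n. w i \<noteq> 0)"
      hence wz: "\<And>i. i < n \<Longrightarrow> z i = c" unfolding w_def by auto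
      from wz[of 0] have "c = 0" using n by (simp add: z_def)
      hence "\<And>j. j < m \<Longrightarrow> y $ j = 0" using wz[of "Suc _"] nm by (force simp: z_def)
      hence "y = 0\<^sub>v m" using yc by (intro eq_vecI, auto)
      thus False using y0 by simp
    qed
  qed
qed

text \<open>\<open>\<mu> = w\<^sup>* F w / w\<^sup>* w\<close>, and \<open>w\<^sup>* F w\<close> is its own conjugate since \<open>F\<close> is real symmetric.\<close>

lemma eigenvalue_real_if_symmetric:
  fixes F :: "nat \<Rightarrow> nat \<Rightarrow> real" and w :: "nat \<Rightarrow> complex"
  assumes sym: "\<And>i j. i < n \<Longrightarrow> j < n \<Longrightarrow> F i j = F j i"
    and eig: "\<And>i. i < n \<Longrightarrow> (\<Sum>j<n. of_real (F i j) * w j) = \<mu> * w i"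
    and nz: "i0 < n" "w i0 \<noteq> 0"
  shows "Im \<mu> = 0"
proof -
  define S where "S = (\<Sum>i<n. cnj (w i) * (\<Sum>j<n. of_real (F i j) * w j))"
  define W where "W = (\<Sum>i<n. (cmod (w i))^2)"
  have "S = (\<Sum>i<n. \<mu> * (cnj (w i) * w i))"
    unfolding S_def by (rule sum.cong, auto simp: eig mult.left_commute)
  also have "\<dots> = \<mu> * of_real W"
    unfolding W_def of_real_sum sum_distrib_left complex_norm_square by (simp add: mult.commute)
  finally have SW: "S = \<mu> * of_real W" .
  have "cnj S = (\<Sum>i<n. \<Sum>j<n. w i * of_real (F i j) * cnj (w j))"
    unfolding S_def by (simp add: sum_distrib_left algebra_simps)
  also have "\<dots> = (\<Sum>j<n. \<Sum>i<n. w i * of_real (F i j) * cnj (w j))"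
    by (rule sum.swap)
  also have "\<dots> = S"
    unfolding S_def by (auto simp: sum_distrib_left sym algebra_simps intro!: sum.cong)
  finally have "Im S = 0" by (metis Im_complex_of_real Reals_cnj_iff complex_is_Real_iff)
  have "0 < (cmod (w i0))^2" using nz by simp
  also have "\<dots> \<le> W" unfolding W_def by (rule member_le_sum, use nz in auto)
  finally have "0 < W" .
  thus ?thesis using SW \<open>Im S = 0\<close> by simp
qed

lemma deflated_char_poly_has_real_root:
  fixes F :: "nat \<Rightarrow> nat \<Rightarrow> real"
  assumes n: "n \<ge> 2" and sym: "\<And>i j. i < n \<Longrightarrow> j < n \<Longrightarrow> F i j = F j i"
    and rs: "\<And>i. i < n \<Longrightarrow> (\<Sum>l<n. F i l) = 0"
  shows "\<exists>r. poly (char_poly (deflated_mat n F)) r = 0"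
proof -
  define Fc where "Fc i j = complex_of_real (F i j)" for i j
  have hom: "deflated_mat n Fc = of_real_hom.mat_hom (deflated_mat n F)"
    by (rule eq_matI, auto simp: deflated_mat_def Fc_def)
  have c: "deflated_mat n Fc \<in> carrier_mat (n-1) (n-1)" "deflated_mat n F \<in> carrier_mat (n-1) (n-1)"
    by (auto simp: deflated_mat_def)
  have "spectrum (deflated_mat n Fc) \<noteq> {}" by (rule spectrum_non_empty[OF c(1)], use n in auto)
  then obtain \<mu> y where ev: "eigenvalue (deflated_mat n Fc) \<mu>" "eigenvector (deflated_mat n Fc) y \<mu>"
    unfolding spectrum_def eigenvalue_def by auto
  have "\<exists>w. (\<forall>i<n. (\<Sum>j<n. Fc i j * w j) = \<mu> * w i) \<and> (\<Sum>i<n. w i) = 0 \<and> (\<exists>i<n. w i \<noteq> 0)"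
    by (rule deflated_mat_eigenvector_lift[OF _ _ _ ev(2)],
        use n sym rs in \<open>auto simp: Fc_def simp flip: of_real_sum\<close>)
  then obtain w i0 where "\<And>i. i < n \<Longrightarrow> (\<Sum>j<n. of_real (F i j) * w j) = \<mu> * w i" "i0 < n" "w i0 \<noteq> 0"
    unfolding Fc_def by blast
  hence "Im \<mu> = 0" using eigenvalue_real_if_symmetric sym by blast
  hence \<mu>: "\<mu> = of_real (Re \<mu>)" by (simp add: complex_eq_iff)
  have "poly (char_poly (deflated_mat n Fc)) \<mu> = 0"
    using eigenvalue_root_char_poly[OF c(1)] ev(1) by simp
  hence "poly (char_poly (deflated_mat n F)) (Re \<mu>) = 0"
    unfolding hom of_real_hom.char_poly_hom[OF c(2)] using \<mu>
    by (metis of_real_eq_0_iff of_real_hom.poly_map_poly)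
  thus ?thesis by blast
qed

lemma sorted_list_of_multiset_add_zero_nth_one_ge:
  fixes R :: "real multiset"
  assumes R: "R \<noteq> {#}" and Rc: "\<And>x. x \<in># R \<Longrightarrow> c \<le> x"
  shows "c \<le> sorted_list_of_multiset (add_mset 0 R) ! 1"
proof -
  define s where "s = sorted_list_of_multiset (add_mset 0 R)"
  have ms: "mset s = add_mset 0 R" unfolding s_def by (rule mset_sorted_list_of_multiset)
  have so: "sorted s" unfolding s_def by (rule sorted_sorted_list_of_multiset)
  have "length s = size (add_mset 0 R)" using ms by (metis size_mset)
  hence "length s \<ge> 2" using R by (cases R, auto)
  then obtain x y rest where s: "s = x # y # rest" by (cases s; cases "tl s", auto)
  have xy: "x \<le> y" using so s by auto
  show ?thesis
  proof (rule ccontr)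
    assume "\<not> c \<le> sorted_list_of_multiset (add_mset 0 R) ! 1"
    hence yc: "y < c" using s unfolding s_def[symmetric] by simp
    have e: "add_mset x (add_mset y (mset rest)) = add_mset 0 R" using ms s by simp
    have "x \<in># add_mset 0 R" using e[symmetric] by simp
    moreover have "x \<notin># R" using Rc xy yc by force
    ultimately have "x = 0" by auto
    hence "y \<in># R" using e by (metis add_mset_remove_trivial union_single_eq_member)
    thus False using Rc yc by force
  qed
qed

lemma laplacian_quadratic_form:
  fixes A :: "nat \<Rightarrow> nat \<Rightarrow> real"
  assumes symA: "\<And>i j. i < n \<Longrightarrow> j < n \<Longrightarrow> A i j = A j i"
  shows "(\<Sum>i<n. w i * (\<Sum>j<n. ((if i = j then (\<Sum>l<n. A i l) else 0) - A i j) * w j))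
     = (\<Sum>i<n. \<Sum>j<n. A i j * (w i - w j)^2) / 2"
proof -
  define S1 where "S1 = (\<Sum>i<n. \<Sum>j<n. A i j * (w i)^2)"
  define S2 where "S2 = (\<Sum>i<n. \<Sum>j<n. A i j * (w i * w j))"
  have row: "(\<Sum>j<n. ((if i = j then (\<Sum>l<n. A i l) else 0) - A i j) * w j)
       = (\<Sum>l<n. A i l) * w i - (\<Sum>j<n. A i j * w j)" if "i < n" for i
    using that by (simp add: left_diff_distrib sum_subtractf if_distrib[of "\<lambda>x. x * _"] sum.delta
        cong: if_cong)
  have "(\<Sum>i<n. w i * (\<Sum>j<n. ((if i = j then (\<Sum>l<n. A i l) else 0) - A i j) * w j)) =
      (\<Sum>i<n. w i * ((\<Sum>l<n. A i l) * w i - (\<Sum>j<n. A i j * w j)))"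
    by (rule sum.cong, simp_all add: row)
  also have "\<dots> = S1 - S2"
    unfolding S1_def S2_def
    by (simp add: algebra_simps sum_subtractf sum_distrib_left sum_distrib_right power2_eq_square)
  finally have form: "(\<Sum>i<n. w i * (\<Sum>j<n. ((if i = j then (\<Sum>l<n. A i l) else 0) - A i j) * w j)) =
      S1 - S2" .
  have swap: "(\<Sum>i<n. \<Sum>j<n. A i j * (w j)^2) = S1"
    unfolding S1_def by (subst sum.swap, auto simp: symA intro!: sum.cong)
  have "(\<Sum>i<n. \<Sum>j<n. A i j * (w i - w j)^2) =
      (\<Sum>i<n. \<Sum>j<n. A i j * (w i)^2 + A i j * (w j)^2 - 2 * (A i j * (w i * w j)))"
    by (auto simp: power2_diff algebra_simps intro!: sum.cong)
  also have "\<dots> = S1 + S1 - 2 * S2"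
    unfolding S2_def using swap by (simp add: sum.distrib sum_subtractf sum_distrib_left S1_def)
  finally show ?thesis using form by simp
qed

text \<open>\<open>0\<close> is always an eigenvalue of a Laplacian, and every other eigenvalue is the Rayleigh
  quotient of a mean-zero eigenvector.\<close>

lemma lambda2_std_laplacian_ge:
  fixes A :: "nat \<Rightarrow> nat \<Rightarrow> real"
  assumes n: "n \<ge> 2" and symA: "\<And>i j. i < n \<Longrightarrow> j < n \<Longrightarrow> A i j = A j i"
    and dirichlet: "\<And>w. (\<Sum>i<n. w i) = 0 \<Longrightarrow>
       c * (\<Sum>i<n. (w i)^2) \<le> (\<Sum>i<n. \<Sum>j<n. A i j * (w i - w j)^2) / 2"
  shows "c \<le> lambda2 (std_laplacian n A)"
proof -
  define F where "F i j = (if i = j then (\<Sum>l<n. A i l) else 0) - A i j" for i j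
  have symF: "F i j = F j i" if "i < n" "j < n" for i j using symA that unfolding F_def by auto
  have rsF: "(\<Sum>l<n. F i l) = 0" if "i < n" for i
    unfolding F_def using that by (simp add: sum_subtractf sum.delta)
  define g where "g = char_poly (deflated_mat n F)"
  have c: "deflated_mat n F \<in> carrier_mat (n-1) (n-1)" by (simp add: deflated_mat_def)
  have g0: "g \<noteq> 0" using degree_monic_char_poly[OF c] unfolding g_def by auto
  have L: "std_laplacian n A = mat n n (\<lambda>(i,j). F i j)" unfolding std_laplacian_def F_def by simp
  have cp: "char_poly (mat n n (\<lambda>(i,j). F i j)) = [:0,1:] * g"
    unfolding g_def using n by (intro char_poly_zero_row_sums rsF) auto
  have ev: "real_eigenvalues (std_laplacian n A) = add_mset 0 (proots g)"
    unfolding real_eigenvalues_def L cp using g0 by (subst proots_mult, auto)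
  have "proots g \<noteq> {#}"
  proof -
    obtain r where "poly g r = 0" using deflated_char_poly_has_real_root[OF n symF rsF] g_def by blast
    hence "r \<in># proots g" using g0 by simp
    thus ?thesis by auto
  qed
  moreover have "c \<le> r" if "r \<in># proots g" for r
  proof -
    have "eigenvalue (deflated_mat n F) r"
      using that g0 eigenvalue_root_char_poly[OF c] unfolding g_def by simp
    then obtain y where "eigenvector (deflated_mat n F) y r" unfolding eigenvalue_def by auto
    from deflated_mat_eigenvector_lift[OF _ symF rsF this] n obtain w i0 where
      w: "\<And>i. i<n \<Longrightarrow> (\<Sum>j<n. F i j * w j) = r * w i" "(\<Sum>i<n. w i) = 0" "i0 < n" "w i0 \<noteq> 0"
      by auto
    have "c * (\<Sum>i<n. (w i)^2) \<le> (\<Sum>i<n. w i * (\<Sum>j<n. F i j * w j))"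
      using dirichlet[OF w(2)] laplacian_quadratic_form[of n A w, OF symA] unfolding F_def by simp
    also have "\<dots> = (\<Sum>i<n. r * (w i)^2)"
      by (rule sum.cong, auto simp: w(1) power2_eq_square)
    also have "\<dots> = r * (\<Sum>i<n. (w i)^2)"
      by (simp add: sum_distrib_left)
    finally have le: "c * (\<Sum>i<n. (w i)^2) \<le> r * (\<Sum>i<n. (w i)^2)" .
    have "0 < (w i0)^2" using w by simp
    also have "\<dots> \<le> (\<Sum>i<n. (w i)^2)" by (rule member_le_sum, use w in auto)
    finally show ?thesis using le by (simp add: mult_le_cancel_right)
  qed
  ultimately show ?thesis
    unfolding lambda2_def ev by (rule sorted_list_of_multiset_add_zero_nth_one_ge)
qed

section \<open>Poincar\'e inequality along the sorted data\<close>

lemma abs_diff_le_sum_abs_succ_diffs: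
  fixes f :: "nat \<Rightarrow> real"
  assumes "q < n" and "r < n"
  shows "\<bar>f q - f r\<bar> \<le> (\<Sum>t<n-1. \<bar>f (Suc t) - f t\<bar>)"
proof -
  have *: "\<bar>f y - f x\<bar> \<le> (\<Sum>t<n-1. \<bar>f (Suc t) - f t\<bar>)" if xy: "x \<le> y" "y < n" for x y
  proof -
    have "\<bar>f y - f x\<bar> = \<bar>\<Sum>t = x..<y. f (Suc t) - f t\<bar>" using sum_Suc_diff'[OF xy(1), of f] by simp
    also have "\<dots> \<le> (\<Sum>t = x..<y. \<bar>f (Suc t) - f t\<bar>)" by (rule sum_abs)
    also have "\<dots> \<le> (\<Sum>t<n-1. \<bar>f (Suc t) - f t\<bar>)" by (rule sum_mono2, use xy in auto)
    finally show ?thesis .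
  qed
  show ?thesis
    using *[of r q] *[of q r] assms by (cases "r \<le> q") (auto simp: abs_minus_commute)
qed

text \<open>Discrete Poincar\'e inequality on the path \<open>0 - 1 - \<dots> - (n-1)\<close>, in the crude form
  obtained from \<open>2n \<Sum> f\<^sup>2 = \<Sum>\<^sub>q\<^sub>r (f q - f r)\<^sup>2\<close> (valid for mean-zero \<open>f\<close>) and
  \<open>\<bar>f q - f r\<bar> \<le> n max\<^sub>t \<bar>f (t+1) - f t\<bar>\<close>.\<close>

lemma path_poincare:
  fixes f :: "nat \<Rightarrow> real"
  assumes s0: "(\<Sum>q<n. f q) = 0"
  shows "(\<Sum>q<n. (f q)^2) \<le> real n ^ 3 * (\<Sum>t<n-1. (f (Suc t) - f t)^2)"
proof (cases "n = 0")
  case False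
  define D where "D = (\<Sum>t<n-1. (f (Suc t) - f t)^2)"
  have D0: "0 \<le> D" unfolding D_def by (rule sum_nonneg, auto)
  have step: "\<bar>f (Suc t) - f t\<bar> \<le> sqrt D" if "t < n-1" for t
  proof -
    have "(f (Suc t) - f t)^2 \<le> D" unfolding D_def by (rule member_le_sum, use that in auto)
    thus ?thesis by (metis real_sqrt_abs real_sqrt_le_mono)
  qed
  have pair: "(f q - f r)^2 \<le> real n ^ 2 * D" if "q < n" "r < n" for q r
  proof -
    have "\<bar>f q - f r\<bar> \<le> (\<Sum>t<n-1. \<bar>f (Suc t) - f t\<bar>)" by (rule abs_diff_le_sum_abs_succ_diffs[OF that])
    also have "\<dots> \<le> (\<Sum>t<n-1. sqrt D)" by (rule sum_mono, use step in auto)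
    also have "\<dots> \<le> real n * sqrt D" using D0 by (simp add: mult_right_mono)
    finally have "\<bar>f q - f r\<bar>^2 \<le> (real n * sqrt D)^2" by (rule power_mono, simp)
    thus ?thesis using D0 by (simp add: power_mult_distrib)
  qed
  have "(\<Sum>q<n. \<Sum>r<n. (f q - f r)^2) = (\<Sum>q<n. \<Sum>r<n. (f q)^2 + (f r)^2 - 2 * f q * f r)"
    by (simp add: power2_diff)
  also have "\<dots> = (\<Sum>q<n. real n * (f q)^2 + (\<Sum>r<n. (f r)^2) - 2 * f q * (\<Sum>r<n. f r))"
    by (simp add: sum.distrib sum_subtractf sum_distrib_left)
  also have "\<dots> = 2 * real n * (\<Sum>q<n. (f q)^2)"
    using s0 by (simp add: sum.distrib sum_distrib_left algebra_simps)
  finally have "2 * real n * (\<Sum>q<n. (f q)^2) = (\<Sum>q<n. \<Sum>r<n. (f q - f r)^2)" ..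
  also have "\<dots> \<le> (\<Sum>q<n. \<Sum>r<n. real n ^ 2 * D)"
    by (intro sum_mono pair) auto
  also have "\<dots> = real n * (real n ^ 3 * D)" by (simp add: power2_eq_square power3_eq_cube)
  finally have "real n * (2 * (\<Sum>q<n. (f q)^2)) \<le> real n * (real n ^ 3 * D)" by (simp add: mult_ac)
  hence "2 * (\<Sum>q<n. (f q)^2) \<le> real n ^ 3 * D" using False by simp
  moreover have "0 \<le> (\<Sum>q<n. (f q)^2)" by (rule sum_nonneg, auto)
  ultimately show ?thesis unfolding D_def using D0 by simp
qed simp

lemma sum_succ_pairs_le_sum_pairs:
  fixes g :: "nat \<Rightarrow> nat \<Rightarrow> real"
  assumes nn: "\<And>q r. q < n \<Longrightarrow> r < n \<Longrightarrow> 0 \<le> g q r"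
    and sym: "\<And>q r. q < n \<Longrightarrow> r < n \<Longrightarrow> g q r = g r q"
  shows "2 * (\<Sum>t<n-1. g t (Suc t)) \<le> (\<Sum>q<n. \<Sum>r<n. g q r)"
proof -
  define E1 where "E1 = (\<lambda>t. (t, Suc t)) ` {..<n-1}"
  define E2 where "E2 = (\<lambda>t. (Suc t, t)) ` {..<n-1}"
  have s1: "(\<Sum>x\<in>E1. case_prod g x) = (\<Sum>t<n-1. g t (Suc t))"
    unfolding E1_def by (subst sum.reindex, auto simp: inj_on_def)
  have s2: "(\<Sum>x\<in>E2. case_prod g x) = (\<Sum>t<n-1. g t (Suc t))"
    unfolding E2_def by (subst sum.reindex, auto simp: inj_on_def intro!: sum.cong sym)
  have "2 * (\<Sum>t<n-1. g t (Suc t)) = (\<Sum>x\<in>E1 \<union> E2. case_prod g x)"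
    using s1 s2 by (subst sum.union_disjoint, auto simp: E1_def E2_def)
  also have "\<dots> \<le> (\<Sum>x\<in>{..<n} \<times> {..<n}. case_prod g x)"
    by (rule sum_mono2, auto simp: E1_def E2_def intro: nn)
  also have "\<dots> = (\<Sum>q<n. \<Sum>r<n. g q r)" by (simp add: sum.cartesian_product)
  finally show ?thesis .
qed

lemma sorting_permutation_exists:
  fixes p :: "nat \<Rightarrow> 'a::linorder"
  assumes inj: "inj_on p {..<n}"
  obtains \<pi> where "bij_betw \<pi> {..<n} {..<n}" and "\<And>q r. q < r \<Longrightarrow> r < n \<Longrightarrow> p (\<pi> q) < p (\<pi> r)"
proof -
  define ps where "ps = sorted_list_of_set (p ` {..<n})"
  have len: "length ps = n" unfolding ps_def using inj by (simp add: card_image)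
  have st: "sorted_wrt (<) ps" unfolding ps_def by (rule strict_sorted_list_of_set)
  have setps: "set ps = p ` {..<n}" unfolding ps_def by simp
  define \<pi> where "\<pi> q = inv_into {..<n} p (ps ! q)" for q
  have pin: "\<pi> q < n \<and> p (\<pi> q) = ps ! q" if "q < n" for q
  proof -
    have "ps ! q \<in> p ` {..<n}" using that len setps nth_mem by metis
    thus ?thesis unfolding \<pi>_def by (metis f_inv_into_f inv_into_into lessThan_iff)
  qed
  have mono: "p (\<pi> q) < p (\<pi> r)" if "q < r" "r < n" for q r
    using pin[of q] pin[of r] that sorted_wrt_nth_less[OF st, of q r] len by auto
  have "inj_on \<pi> {..<n}"
    by (rule inj_onI, metis lessThan_iff linorder_neqE_nat mono order_less_irrefl)
  hence "bij_betw \<pi> {..<n} {..<n}"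
    by (intro bij_betw_imageI endo_inj_surj) (use pin in auto)
  thus ?thesis using mono that by blast
qed

lemma sorted_succ_adjacent:
  fixes p :: "nat \<Rightarrow> 'a::linorder"
  assumes bij: "bij_betw \<pi> {..<n} {..<n}"
    and mono: "\<And>q r. q < r \<Longrightarrow> r < n \<Longrightarrow> p (\<pi> q) < p (\<pi> r)"
    and t: "Suc t < n" and l: "l < n"
  shows "\<not> (p (\<pi> t) < p l \<and> p l < p (\<pi> (Suc t)))"
proof
  assume between: "p (\<pi> t) < p l \<and> p l < p (\<pi> (Suc t))"
  obtain u where u: "u < n" "l = \<pi> u" using bij l by (metis bij_betw_iff_bijections lessThan_iff)
  have "t < u" using mono[of u t] between u t by (metis linorder_neqE_nat order.asym less_trans lessI)
  moreover have "u < Suc t" using mono[of "Suc t" u] between u by (metis linorder_neqE_nat order.asym)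
  ultimately show False by simp
qed

text \<open>Keeping only the edges between neighbours in the sorted order of \<open>p\<close>, whose weights
  are at least \<open>K\<close>, bounds the Dirichlet form of a mean-zero vector from below.\<close>

lemma dirichlet_form_ge_neighbour_weight:
  fixes A :: "nat \<Rightarrow> nat \<Rightarrow> real" and p :: "nat \<Rightarrow> real"
  assumes n: "n \<ge> 1"
    and symA: "\<And>i j. i < n \<Longrightarrow> j < n \<Longrightarrow> A i j = A j i"
    and nnA: "\<And>i j. i < n \<Longrightarrow> j < n \<Longrightarrow> 0 \<le> A i j"
    and pinj: "inj_on p {..<n}" and K0: "0 \<le> K"
    and adj: "\<And>i j. i < n \<Longrightarrow> j < n \<Longrightarrow> p i < p j \<Longrightarrow> \<forall>l<n. \<not> (p i < p l \<and> p l < p j) \<Longrightarrow> K \<le> A i j"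
    and s0: "(\<Sum>i<n. w i) = 0"
  shows "K / real n ^ 3 * (\<Sum>i<n. (w i)^2) \<le> (\<Sum>i<n. \<Sum>j<n. A i j * (w i - w j)^2) / 2"
proof -
  obtain \<pi> where bij: "bij_betw \<pi> {..<n} {..<n}"
    and mono: "\<And>q r. q < r \<Longrightarrow> r < n \<Longrightarrow> p (\<pi> q) < p (\<pi> r)"
    using sorting_permutation_exists[OF pinj] by blast
  have pin: "\<pi> q < n" if "q < n" for q using bij that by (auto dest: bij_betwE)
  have reindex: "(\<Sum>q<n. h (\<pi> q)) = (\<Sum>i<n. h i)" for h :: "nat \<Rightarrow> real"
    by (rule sum.reindex_bij_betw[OF bij])
  define f where "f q = w (\<pi> q)" for q
  define g where "g q r = A (\<pi> q) (\<pi> r) * (f q - f r)^2" for q r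
  have "(\<Sum>i<n. \<Sum>j<n. A i j * (w i - w j)^2) = (\<Sum>q<n. \<Sum>r<n. g q r)"
  proof -
    have "(\<Sum>q<n. \<Sum>r<n. g q r) = (\<Sum>q<n. \<Sum>j<n. A (\<pi> q) j * (w (\<pi> q) - w j)^2)"
      unfolding g_def f_def by (rule sum.cong[OF refl], rule reindex)
    also have "\<dots> = (\<Sum>i<n. \<Sum>j<n. A i j * (w i - w j)^2)"
      by (rule reindex)
    finally show ?thesis by simp
  qed
  hence pairs: "(\<Sum>t<n-1. g t (Suc t)) \<le> (\<Sum>i<n. \<Sum>j<n. A i j * (w i - w j)^2) / 2"
    using sum_succ_pairs_le_sum_pairs[of n g] by (auto simp: g_def pin nnA symA power2_commute)
  have weight: "K * (f (Suc t) - f t)^2 \<le> g t (Suc t)" if "t < n - 1" for t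
  proof -
    have "K \<le> A (\<pi> t) (\<pi> (Suc t))"
      using that by (intro adj pin mono allI impI sorted_succ_adjacent[where p=p and n=n, OF bij mono]) auto
    thus ?thesis unfolding g_def by (simp add: mult_right_mono power2_commute)
  qed
  have "(\<Sum>q<n. f q) = 0" unfolding f_def using s0 by (simp add: reindex)
  hence "(\<Sum>i<n. (w i)^2) \<le> real n ^ 3 * (\<Sum>t<n-1. (f (Suc t) - f t)^2)"
    using path_poincare[of f n] reindex[of "\<lambda>i. (w i)^2"] unfolding f_def by simp
  hence "K / real n ^ 3 * (\<Sum>i<n. (w i)^2) \<le> K * (\<Sum>t<n-1. (f (Suc t) - f t)^2)"
    using K0 n by (simp add: field_simps mult_left_mono)
  also have "\<dots> \<le> (\<Sum>t<n-1. g t (Suc t))"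
    unfolding sum_distrib_left by (rule sum_mono, simp add: weight)
  also note pairs
  finally show ?thesis .
qed

section \<open>The warping map\<close>

lemma powr_add_le_add_powr:
  fixes x y q :: real
  assumes x: "0 \<le> x" and y: "0 \<le> y" and q: "0 < q" "q \<le> 1"
  shows "(x + y) powr q \<le> x powr q + y powr q"
proof (cases "x = 0 \<or> y = 0")
  case True thus ?thesis using q by auto
next
  case False
  hence xp: "0 < x" and yp: "0 < y" using x y by auto
  have "(x + y) powr q = x * (x + y) powr (q - 1) + y * (x + y) powr (q - 1)"
    using xp yp powr_add[of "x+y" "q-1" 1] by (simp add: algebra_simps)
  also have "\<dots> \<le> x * x powr (q - 1) + y * y powr (q - 1)"
    using powr_mono2'[of "q-1" x "x+y"] powr_mono2'[of "q-1" y "x+y"] q xp yp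
    by (intro add_mono mult_left_mono, auto)
  also have "\<dots> = x powr q + y powr q"
    using xp yp powr_add[of x "q-1" 1] powr_add[of y "q-1" 1] by (simp add: mult.commute)
  finally show ?thesis .
qed

lemma powr_add_diff_bounds:
  fixes z c q :: real
  assumes "0 \<le> z" and "0 < c" and "0 < q" "q \<le> 1"
  shows "0 \<le> (z + c) powr q - c powr q" and "(z + c) powr q - c powr q \<le> z powr q"
  using powr_mono2[of q c "z+c"] powr_add_le_add_powr[of z c q] assms by auto

text \<open>Outside \<open>\<Delta>\<close> the warping is \<open>\<delta> ((d + c) powr (1-\<delta>) - c powr (1-\<delta>))\<close> at distance \<open>d\<close>
  from \<open>\<Delta>\<close>, where \<open>c = (\<delta>(1-\<delta>)) powr (1/\<delta>)\<close>; sub-additivity of \<open>powr (1-\<delta>)\<close> bounds it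
  by \<open>\<delta> d powr (1-\<delta>)\<close>.\<close>

lemma T_Delta_left_bounds:
  assumes \<delta>: "0 < \<delta>" "\<delta> < 1" and z: "z < a"
  shows "- (\<delta> * (a - z) powr (1 - \<delta>)) \<le> T_Delta \<delta> a b z" and "T_Delta \<delta> a b z \<le> 0"
proof -
  define c where "c = (\<delta> * (1 - \<delta>)) powr (1 / \<delta>)"
  have c0: "0 < c" unfolding c_def using \<delta> by simp
  have "c powr (1 - \<delta>) = (\<delta> * (1 - \<delta>)) powr ((1 - \<delta>) / \<delta>)"
    unfolding c_def by (simp add: powr_powr)
  hence T: "T_Delta \<delta> a b z = - \<delta> * ((a - z + c) powr (1 - \<delta>) - c powr (1 - \<delta>))"
    unfolding T_Delta_def c_def using z by (simp add: algebra_simps)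
  note bounds = powr_add_diff_bounds[of "a - z" c "1 - \<delta>"]
  show "- (\<delta> * (a - z) powr (1 - \<delta>)) \<le> T_Delta \<delta> a b z" and "T_Delta \<delta> a b z \<le> 0"
    unfolding T using bounds z c0 \<delta> by (simp_all add: mult_left_mono)
qed

lemma T_Delta_right_bounds:
  assumes \<delta>: "0 < \<delta>" "\<delta> < 1" and ab: "a \<le> b" and z: "b < z"
  shows "b - a \<le> T_Delta \<delta> a b z" and "T_Delta \<delta> a b z \<le> (b - a) + \<delta> * (z - b) powr (1 - \<delta>)"
proof -
  define c where "c = (\<delta> * (1 - \<delta>)) powr (1 / \<delta>)"
  have c0: "0 < c" unfolding c_def using \<delta> by simp
  have "c powr (1 - \<delta>) = (\<delta> * (1 - \<delta>)) powr ((1 - \<delta>) / \<delta>)"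
    unfolding c_def by (simp add: powr_powr)
  hence T: "T_Delta \<delta> a b z = \<delta> * ((z - b + c) powr (1 - \<delta>) - c powr (1 - \<delta>)) + (b - a)"
    unfolding T_Delta_def c_def using z ab by (simp add: algebra_simps)
  note bounds = powr_add_diff_bounds[of "z - b" c "1 - \<delta>"]
  show "b - a \<le> T_Delta \<delta> a b z" and "T_Delta \<delta> a b z \<le> (b - a) + \<delta> * (z - b) powr (1 - \<delta>)"
    unfolding T using bounds z c0 \<delta> by (simp_all add: mult_left_mono)
qed

lemma T_Delta_mid: "a \<le> z \<Longrightarrow> z \<le> b \<Longrightarrow> T_Delta \<delta> a b z = z - a"
  unfolding T_Delta_def by simp

section \<open>Gaps between neighbouring data points\<close>

definition dist_to_points :: "(nat \<Rightarrow> real) \<Rightarrow> nat \<Rightarrow> real \<Rightarrow> real" where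
  "dist_to_points p N x = Min ((\<lambda>i. \<bar>x - p i\<bar>) ` {..<N})"

lemma dist_to_points_ge:
  assumes "0 < N" and "\<And>i. i < N \<Longrightarrow> r \<le> \<bar>x - p i\<bar>"
  shows "r \<le> dist_to_points p N x"
  unfolding dist_to_points_def using assms by (subst Min_ge_iff) auto

lemma dist_to_points_le_SUP:
  assumes N: "0 < N" and x: "x \<in> {c..d}"
  shows "dist_to_points p N x \<le> (SUP y\<in>{c..d}. dist_to_points p N y)"
proof (rule cSUP_upper[OF x])
  have "dist_to_points p N y \<le> \<bar>c\<bar> + \<bar>d\<bar> + \<bar>p 0\<bar>" if "y \<in> {c..d}" for y
  proof -
    have "dist_to_points p N y \<le> \<bar>y - p 0\<bar>" unfolding dist_to_points_def using N by (intro Min_le) auto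
    thus ?thesis using that by auto
  qed
  thus "bdd_above (dist_to_points p N ` {c..d})" by (rule bdd_aboveI2)
qed

lemma first_gap_le_covering_radius:
  fixes p :: "nat \<Rightarrow> real" and N :: nat and a b :: real
  defines "PD \<equiv> p ` {..<N} \<inter> {a..b}"
  defines "M \<equiv> SUP x\<in>{(a + Min PD) / 2..(b + Max PD) / 2}. dist_to_points p N x"
  assumes PD: "PD \<noteq> {}"
  shows "Min PD - a \<le> 2 * M"
proof -
  define a' where "a' = (a + Min PD) / 2"
  have fin: "finite PD" unfolding PD_def by simp
  have N: "0 < N" using PD unfolding PD_def by auto
  have "Min PD \<in> PD" "Max PD \<in> PD" using fin PD by auto
  hence a': "a' \<in> {(a + Min PD) / 2..(b + Max PD) / 2}"
    unfolding a'_def PD_def using Min_le[OF fin \<open>Max PD \<in> PD\<close>] by auto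
  have "a' - a \<le> \<bar>a' - p i\<bar>" if "i < N" for i
  proof (cases "p i < a")
    case False
    hence "Min PD \<le> p i" using \<open>Min PD \<in> PD\<close> that fin unfolding PD_def by (cases "p i \<le> b") auto
    thus ?thesis unfolding a'_def by (simp add: abs_if field_simps)
  qed (simp add: a'_def abs_if field_simps)
  hence "a' - a \<le> dist_to_points p N a'" by (rule dist_to_points_ge[OF N])
  also have "\<dots> \<le> M" unfolding M_def by (rule dist_to_points_le_SUP[OF N a'])
  finally show ?thesis unfolding a'_def by (simp add: field_simps)
qed

lemma last_gap_le_covering_radius:
  fixes p :: "nat \<Rightarrow> real" and N :: nat and a b :: real
  defines "PD \<equiv> p ` {..<N} \<inter> {a..b}"
  defines "M \<equiv> SUP x\<in>{(a + Min PD) / 2..(b + Max PD) / 2}. dist_to_points p N x"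
  assumes PD: "PD \<noteq> {}"
  shows "b - Max PD \<le> 2 * M"
proof -
  define b' where "b' = (b + Max PD) / 2"
  have fin: "finite PD" unfolding PD_def by simp
  have N: "0 < N" using PD unfolding PD_def by auto
  have "Min PD \<in> PD" "Max PD \<in> PD" using fin PD by auto
  hence b': "b' \<in> {(a + Min PD) / 2..(b + Max PD) / 2}"
    unfolding b'_def PD_def using Min_le[OF fin \<open>Max PD \<in> PD\<close>] by auto
  have "b - b' \<le> \<bar>b' - p i\<bar>" if "i < N" for i
  proof (cases "b < p i")
    case False
    hence "p i \<le> Max PD" using \<open>Max PD \<in> PD\<close> that fin unfolding PD_def by (cases "a \<le> p i") auto
    thus ?thesis unfolding b'_def by (simp add: abs_if field_simps)
  qed (simp add: b'_def abs_if field_simps)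
  hence "b - b' \<le> dist_to_points p N b'" by (rule dist_to_points_ge[OF N])
  also have "\<dots> \<le> M" unfolding M_def by (rule dist_to_points_le_SUP[OF N b'])
  finally show ?thesis unfolding b'_def by (simp add: field_simps)
qed

lemma inner_gap_le_covering_radius:
  fixes p :: "nat \<Rightarrow> real" and N :: nat and a b :: real
  defines "PD \<equiv> p ` {..<N} \<inter> {a..b}"
  defines "M \<equiv> SUP x\<in>{(a + Min PD) / 2..(b + Max PD) / 2}. dist_to_points p N x"
  assumes ij: "i < N" "j < N" "a \<le> p i" "p i < p j" "p j \<le> b"
    and adj: "\<forall>l<N. \<not> (p i < p l \<and> p l < p j)"
  shows "p j - p i \<le> 2 * M"
proof -
  define x where "x = (p i + p j) / 2"
  have fin: "finite PD" unfolding PD_def by simp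
  have N: "0 < N" using ij by simp
  have "p i \<in> PD" "p j \<in> PD" unfolding PD_def using ij by auto
  moreover have "Min PD \<in> PD" "Max PD \<in> PD" using fin calculation by (auto intro!: Min_in Max_in)
  ultimately have "Min PD \<le> p i" "p j \<le> Max PD" "a \<le> Min PD" "Max PD \<le> b"
    using fin unfolding PD_def by auto
  hence x: "x \<in> {(a + Min PD) / 2..(b + Max PD) / 2}" unfolding x_def using ij by auto
  have "(p j - p i) / 2 \<le> \<bar>x - p l\<bar>" if "l < N" for l
    using adj that ij unfolding x_def by (fastforce simp: abs_if field_simps)
  hence "(p j - p i) / 2 \<le> dist_to_points p N x" by (rule dist_to_points_ge[OF N])
  also have "\<dots> \<le> M" unfolding M_def by (rule dist_to_points_le_SUP[OF N x])
  finally show ?thesis by simp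
qed

lemma T_Delta_neighbour_gap_le:
  fixes p :: "nat \<Rightarrow> real" and N :: nat and a b \<delta> :: real
  defines "P \<equiv> p ` {..<N}"
  defines "PD \<equiv> P \<inter> {a..b}"
  defines "M \<equiv> SUP x\<in>{(a + Min PD) / 2..(b + Max PD) / 2}. dist_to_points p N x"
    and "D \<equiv> max (a - Min P) (Max P - b)"
  assumes \<delta>: "0 < \<delta>" "\<delta> < 1" and ab: "a \<le> b" and PD: "PD \<noteq> {}"
    and ij: "i < N" "j < N" "p i < p j" and adj: "\<forall>l<N. \<not> (p i < p l \<and> p l < p j)"
  shows "\<bar>T_Delta \<delta> a b (p i) - T_Delta \<delta> a b (p j)\<bar> \<le> 2 * M + \<delta> * max D (D powr (1 - \<delta>))"
proof -
  define C where "C = max D (D powr (1 - \<delta>))"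
  have finP: "finite P" and finPD: "finite PD" unfolding P_def PD_def by auto
  have "Min PD \<in> PD" "Max PD \<in> PD" using finPD PD by auto
  then obtain l0 l1 where l0: "l0 < N" "Min PD = p l0" "a \<le> p l0" "p l0 \<le> b"
    and l1: "l1 < N" "Max PD = p l1" "a \<le> p l1" "p l1 \<le> b"
    unfolding PD_def P_def by auto
  have first: "Min PD - a \<le> 2 * M" and last: "b - Max PD \<le> 2 * M"
    using first_gap_le_covering_radius[of p N a b] last_gap_le_covering_radius[of p N a b] PD
    unfolding M_def PD_def P_def by simp_all
  have outside: "\<delta> * d powr (1 - \<delta>) \<le> \<delta> * C" if "0 < d" "d \<le> D" for d
    using that \<delta> powr_mono2[of "1 - \<delta>" d D] unfolding C_def by (simp add: mult_left_mono)
  have left: "- (\<delta> * C) \<le> T_Delta \<delta> a b (p l) \<and> T_Delta \<delta> a b (p l) \<le> 0" if "l < N" "p l < a" for l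
  proof -
    have "p l \<in> P" unfolding P_def using that by simp
    hence "a - p l \<le> D" using Min_le[OF finP] unfolding D_def by (simp add: le_max_iff_disj)
    thus ?thesis using T_Delta_left_bounds[OF \<delta> \<open>p l < a\<close>, of b] outside[of "a - p l"] that by auto
  qed
  have right: "b - a \<le> T_Delta \<delta> a b (p l) \<and> T_Delta \<delta> a b (p l) \<le> b - a + \<delta> * C"
    if "l < N" "b < p l" for l
  proof -
    have "p l \<in> P" unfolding P_def using that by simp
    hence "p l - b \<le> D" using Max_ge[OF finP] unfolding D_def by (simp add: le_max_iff_disj)
    thus ?thesis using T_Delta_right_bounds[OF \<delta> ab \<open>b < p l\<close>] outside[of "p l - b"] that by auto
  qed
  have M0: "0 \<le> 2 * M" using first l0 by simp
  have C0: "0 \<le> \<delta> * C" using \<delta> unfolding C_def by (simp add: max.coboundedI2)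
  consider "p j < a" | "p i < a" "a \<le> p j" | "a \<le> p i" "p j \<le> b" | "p i \<le> b" "b < p j" | "b < p i"
    using ij(3) by linarith
  hence "\<bar>T_Delta \<delta> a b (p i) - T_Delta \<delta> a b (p j)\<bar> \<le> 2 * M + \<delta> * C"
  proof cases
    case 1
    thus ?thesis using left[OF ij(1)] left[OF ij(2)] ij(3) M0 by (auto simp: abs_le_iff)
  next
    case 2
    have "p j \<le> Min PD" using adj l0 2 by force
    moreover from this have "p j \<le> b" using l0 by simp
    hence "p j \<in> PD" unfolding PD_def P_def using ij(2) 2 by auto
    ultimately have "p j = Min PD" using Min_le[OF finPD] by (simp add: eq_iff)
    hence "T_Delta \<delta> a b (p j) = Min PD - a" using T_Delta_mid[of a "p j" b] 2 l0 by simp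
    thus ?thesis using left[OF ij(1) 2(1)] first l0 C0 by (auto simp: abs_le_iff)
  next
    case 3
    thus ?thesis using inner_gap_le_covering_radius[of i N j a p b] ij adj C0 T_Delta_mid
      unfolding M_def PD_def P_def by (simp add: abs_le_iff)
  next
    case 4
    have "Max PD \<le> p i" using adj l1 4 by force
    moreover from this have "a \<le> p i" using l1 by simp
    hence "p i \<in> PD" unfolding PD_def P_def using ij(1) 4 by auto
    ultimately have "p i = Max PD" using Max_ge[OF finPD] by (simp add: eq_iff)
    hence "T_Delta \<delta> a b (p i) = b - a - (b - Max PD)" using T_Delta_mid[of a "p i" b] 4 l1 by simp
    thus ?thesis using right[OF ij(2) 4(2)] last l1 C0 by (auto simp: abs_le_iff)
  next
    case 5
    thus ?thesis using right[OF ij(1)] right[OF ij(2)] ij(3) M0 by (auto simp: abs_le_iff)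
  qed
  thus ?thesis unfolding C_def .
qed

theorem lemma2:
  fixes k :: "real \<Rightarrow> real" and \<sigma> \<delta> a b :: real and N :: nat and p :: "nat \<Rightarrow> real"
  assumes k_pos: "\<forall>x\<ge>0. k x > 0"
    and k_noninc: "\<forall>x y. 0 \<le> x \<longrightarrow> x \<le> y \<longrightarrow> k y \<le> k x"
    and \<sigma>_pos: "\<sigma> > 0"
    and \<delta>_range: "0 < \<delta>" "\<delta> \<le> 1/2"
    and p_inj: "inj_on p {..<N}"
    and ab: "a < b"
    and two_in: "card {i. i < N \<and> a \<le> p i \<and> p i \<le> b} \<ge> 2"
    and a_ge: "a \<ge> Min (p ` {..<N})"
    and b_le: "b \<le> Max (p ` {..<N})"
  shows
    "let P = p ` {..<N};
         PD = P \<inter> {a..b};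
         a' = (a + Min PD) / 2;
         b' = (b + Max PD) / 2;
         M = (SUP x\<in>{a'..b'}. Min ((\<lambda>i. \<bar>x - p i\<bar>) ` {..<N}));
         D = max (a - Min P) (Max P - b);
         C = max D (D powr (1 - \<delta>));
         L = std_laplacian N (\<lambda>i j. k (\<bar>T_Delta \<delta> a b (p i) - T_Delta \<delta> a b (p j)\<bar> / \<sigma>))
     in lambda2 L \<ge> 1 / (real (card P))^3 * k ((2 * M + \<delta> * C) / \<sigma>)"
proof -
  define P where "P = p ` {..<N}"
  define PD where "PD = P \<inter> {a..b}"
  define M where "M = (SUP x\<in>{(a + Min PD) / 2..(b + Max PD) / 2}. dist_to_points p N x)"
  define D where "D = max (a - Min P) (Max P - b)"
  define K where "K = k ((2 * M + \<delta> * max D (D powr (1 - \<delta>))) / \<sigma>)"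
  define A where "A = (\<lambda>i j. k (\<bar>T_Delta \<delta> a b (p i) - T_Delta \<delta> a b (p j)\<bar> / \<sigma>))"
  have "{i. i < N \<and> a \<le> p i \<and> p i \<le> b} \<subseteq> {..<N}" by auto
  with two_in have N2: "2 \<le> N" by (metis card_lessThan card_mono finite_lessThan le_trans)
  from two_in obtain i where "i < N" "a \<le> p i" "p i \<le> b"
    by (metis (mono_tags, lifting) Collect_empty_eq card.empty not_numeral_le_zero)
  hence PD: "PD \<noteq> {}" unfolding PD_def P_def by auto
  have "a \<le> Min PD" using PD Min_in[of PD] unfolding PD_def P_def by auto
  hence "0 \<le> M"
    using first_gap_le_covering_radius[of p N a b] PD unfolding M_def PD_def P_def by linarith
  hence K0: "0 \<le> K"
    using k_pos \<sigma>_pos \<delta>_range unfolding K_def by (simp add: less_imp_le max.coboundedI2)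
  have neighbour: "K \<le> A i j" if "i < N" "j < N" "p i < p j" "\<forall>l<N. \<not> (p i < p l \<and> p l < p j)" for i j
    using T_Delta_neighbour_gap_le[of \<delta> a b p N i j] that \<delta>_range ab PD \<sigma>_pos k_noninc
    unfolding K_def A_def M_def D_def PD_def P_def by (simp add: divide_right_mono)
  have "K / real N ^ 3 \<le> lambda2 (std_laplacian N A)"
    using N2 p_inj K0 k_pos \<sigma>_pos
    by (intro lambda2_std_laplacian_ge dirichlet_form_ge_neighbour_weight neighbour)
      (auto simp: A_def abs_minus_commute less_imp_le)
  moreover have "card P = N" unfolding P_def using p_inj by (simp add: card_image)
  ultimately show ?thesis
    unfolding Let_def K_def A_def M_def D_def PD_def P_def dist_to_points_def by simp
qed

end
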